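(* Assume $U_1>2U_2$, $0<\varepsilon\ll U_2$ and $U_2/\varepsilon\notin\mathbb N$. Let $(\bar\eta,\eta)$ be a move with $\bar\eta\in\mathcal B$. If $\Delta s:=s(\eta)-s(\bar\eta)\ge3$, $p_{min}(\eta)\ge4$ and $p_2(\bar\eta)\ge\ell_2^*$, then either $\eta\in\mathcal B$, or $\eta\notin\mathcal B$ and $H(\bar\eta)>\Gamma$.
   Context: Let $L\in\mathbb N$, $\Lambda=\{0,\dots,L\}^2$, $\partial^-\Lambda=\{x\in\Lambda:\exists y\notin\Lambda,\ |y-x|=1\}$, $\Lambda_0=\Lambda\setminus\partial^-\Lambda$, configurations $\eta\in\{0,1\}^\Lambda$ with energy $H(\eta)=-U_1\sum_{(x,y)\in\Lambda^*_{0,h}}\eta(x)\eta(y)-U_2\sum_{(x,y)\in\Lambda^*_{0,v}}\eta(x)\eta(y)+\Delta\sum_{x\in\Lambda}\eta(x)$, with $\Lambda^*_{0,h}$ ($\Lambda^*_{0,v}$) the horizontal (vertical) unoriented nearest-neighbour bonds inside $\Lambda_0$, $U_1,U_2,\Delta>0$. $\varepsilon=U_1+U_2-\Delta$, $\ell_2^*=\lceil U_2/\varepsilon\rceil$, $s^*=3\ell_2^*-1$, $\Gamma=U_1\ell_2^*+2U_2\ell_2^*+U_1-U_2-2\varepsilon(\ell_2^* )^2+3\varepsilon\ell_2^*-2\varepsilon$. A move is a pair $(\bar\eta,\eta)$ with $\eta\ne\bar\eta$ obtained from $\bar\eta$ by exchanging the values at two nearest-neighbour sites of $\Lambda$, or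 by setting the value at some site of $\partial^-\Lambda$ to $0$, or setting it to $1$. Geometry: a free particle is an occupied site in $\partial^-\Lambda$ or an occupied site of $\Lambda_0$ with no occupied nearest neighbour in $\Lambda_0$; $n(\eta)$ is the number of free particles; $\eta_{cl}$ is the set of occupied sites of $\Lambda_0$ that are not free. $C(\eta_{cl})$ is the union of closed unit squares centred at sites of $\eta_{cl}$; $p_1$ ($p_2$) is the number of columns (rows) of $\mathbb Z^2$ meeting $C(\eta_{cl})$; $s=p_1+p_2$; $v=p_1p_2-|\eta_{cl}|$; $p_{min}=\min\{p_1,p_2\}$, $p_{max}=\max\{p_1,p_2\}$. $\mathcal B$ is the set of $\eta$ such that: $s(\eta)\le s^*-2$; or $s(\eta)\ge s^*-1$ and $p_2(\eta)\le\ell_2^*-1$; or $s(\eta)=s^*-1$, $p_2(\eta)\ge\ell_2^*$ and $v(\eta)\ge p_{min}(\eta)-1$; or $s(\eta)\ge s^*$, $p_2(\eta)=\ell_2^*$ and $v(\eta)\ge p_{max}(\eta)-1$. *)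

theory Defs
  imports Complex_Main
begin

type_synonym site = "int \<times> int"

text \<open>Lambda = {0,...,L}^2; configurations are represented by their set of occupied sites
(a subset of Lambda).\<close>
definition Lam :: "nat \<Rightarrow> site set" where
  "Lam L = {0..int L} \<times> {0..int L}"

definition nn :: "site \<Rightarrow> site \<Rightarrow> bool" where
  "nn x y \<longleftrightarrow> \<bar>fst x - fst y\<bar> + \<bar>snd x - snd y\<bar> = 1"

definition bdry :: "nat \<Rightarrow> site set" where
  "bdry L = {x \<in> Lam L. \<exists>y. nn x y \<and> y \<notin> Lam L}"

definition Lam0 :: "nat \<Rightarrow> site set" where
  "Lam0 L = Lam L - bdry L"

definition config :: "nat \<Rightarrow> site set \<Rightarrow> bool" where
  "config L \<eta> \<longleftrightarrow> \<eta> \<subseteq> Lam L"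

definition hbonds :: "nat \<Rightarrow> site set \<Rightarrow> nat" where
  "hbonds L \<eta> = card {x. x \<in> Lam0 L \<and> (fst x + 1, snd x) \<in> Lam0 L \<and> x \<in> \<eta> \<and> (fst x + 1, snd x) \<in> \<eta>}"

definition vbonds :: "nat \<Rightarrow> site set \<Rightarrow> nat" where
  "vbonds L \<eta> = card {x. x \<in> Lam0 L \<and> (fst x, snd x + 1) \<in> Lam0 L \<and> x \<in> \<eta> \<and> (fst x, snd x + 1) \<in> \<eta>}"

definition H :: "nat \<Rightarrow> real \<Rightarrow> real \<Rightarrow> real \<Rightarrow> site set \<Rightarrow> real" where
  "H L U1 U2 \<Delta> \<eta> = - U1 * real (hbonds L \<eta>) - U2 * real (vbonds L \<eta>) + \<Delta> * real (card \<eta>)"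

definition swap_sites :: "site \<Rightarrow> site \<Rightarrow> site set \<Rightarrow> site set" where
  "swap_sites x y \<eta> = {z. (z = x \<and> y \<in> \<eta>) \<or> (z = y \<and> x \<in> \<eta>) \<or> (z \<noteq> x \<and> z \<noteq> y \<and> z \<in> \<eta>)}"

definition move :: "nat \<Rightarrow> site set \<Rightarrow> site set \<Rightarrow> bool" where
  "move L \<eta>b \<eta> \<longleftrightarrow> config L \<eta>b \<and> \<eta> \<noteq> \<eta>b \<and>
     ((\<exists>x y. x \<in> Lam L \<and> y \<in> Lam L \<and> nn x y \<and> \<eta> = swap_sites x y \<eta>b)
      \<or> (\<exists>x \<in> bdry L. \<eta> = \<eta>b - {x})
      \<or> (\<exists>x \<in> bdry L. \<eta> = insert x \<eta>b))"

definition eta_cl :: "nat \<Rightarrow> site set \<Rightarrow> site set" where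
  "eta_cl L \<eta> = {x \<in> \<eta> \<inter> Lam0 L. \<exists>y. nn x y \<and> y \<in> \<eta> \<inter> Lam0 L}"

text \<open>A column {k} x Z meets the union of closed unit squares centred at the sites of
eta_cl iff k is the first coordinate of such a site; similarly for rows.\<close>
definition p1 :: "nat \<Rightarrow> site set \<Rightarrow> nat" where
  "p1 L \<eta> = card (fst ` eta_cl L \<eta>)"

definition p2 :: "nat \<Rightarrow> site set \<Rightarrow> nat" where
  "p2 L \<eta> = card (snd ` eta_cl L \<eta>)"

definition s_of :: "nat \<Rightarrow> site set \<Rightarrow> nat" where
  "s_of L \<eta> = p1 L \<eta> + p2 L \<eta>"

definition v_of :: "nat \<Rightarrow> site set \<Rightarrow> int" where
  "v_of L \<eta> = int (p1 L \<eta>) * int (p2 L \<eta>) - int (card (eta_cl L \<eta>))"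

definition pmin :: "nat \<Rightarrow> site set \<Rightarrow> nat" where
  "pmin L \<eta> = min (p1 L \<eta>) (p2 L \<eta>)"

definition pmax :: "nat \<Rightarrow> site set \<Rightarrow> nat" where
  "pmax L \<eta> = max (p1 L \<eta>) (p2 L \<eta>)"

definition eps :: "real \<Rightarrow> real \<Rightarrow> real \<Rightarrow> real" where
  "eps U1 U2 \<Delta> = U1 + U2 - \<Delta>"

definition ell2 :: "real \<Rightarrow> real \<Rightarrow> real \<Rightarrow> int" where
  "ell2 U1 U2 \<Delta> = \<lceil>U2 / eps U1 U2 \<Delta>\<rceil>"

definition sstar :: "real \<Rightarrow> real \<Rightarrow> real \<Rightarrow> int" where
  "sstar U1 U2 \<Delta> = 3 * ell2 U1 U2 \<Delta> - 1"

definition Gamma :: "real \<Rightarrow> real \<Rightarrow> real \<Rightarrow> real" where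
  "Gamma U1 U2 \<Delta> = (let e = eps U1 U2 \<Delta>; l = real_of_int (ell2 U1 U2 \<Delta>) in
     U1 * l + 2 * U2 * l + U1 - U2 - 2 * e * l\<^sup>2 + 3 * e * l - 2 * e)"

definition inB :: "nat \<Rightarrow> real \<Rightarrow> real \<Rightarrow> real \<Rightarrow> site set \<Rightarrow> bool" where
  "inB L U1 U2 \<Delta> \<eta> \<longleftrightarrow>
     (let s = int (s_of L \<eta>); ss = sstar U1 U2 \<Delta>; l = ell2 U1 U2 \<Delta>; q2 = int (p2 L \<eta>);
          v = v_of L \<eta> in
      s \<le> ss - 2
      \<or> (s \<ge> ss - 1 \<and> q2 \<le> l - 1)
      \<or> (s = ss - 1 \<and> q2 \<ge> l \<and> v \<ge> int (pmin L \<eta>) - 1)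
      \<or> (s \<ge> ss \<and> q2 = l \<and> v \<ge> int (pmax L \<eta>) - 1))"

end

theory Submission
  imports Defs
begin

(* A move raises s = p1 + p2 by at most 2 unless the old configuration has at least two free
   particles: a swap brings in one new site y, which together with at most one free particle next
   to it is all that can join the cluster, and a site adjacent to the cluster adds at most one new
   row or column.  So \<Delta>s \<ge> 3 forces two free particles, each costing \<Delta>.  Bounding the horizontal
   bonds of the cluster by |cl| - p2 and the vertical ones by |cl| - p1 gives
   H \<ge> U1 p2 + U2 p1 - \<epsilon> |cl| + 2\<Delta>, and the constraints of \<B> together with p2 \<ge> \<ell>2* push this
   above \<Gamma>.  Hence the second alternative always holds. *)

definition free_particles :: "nat \<Rightarrow> site set \<Rightarrow> site set" where
  "free_particles L \<eta> = \<eta> - eta_cl L \<eta>"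

definition proj_card :: "site set \<Rightarrow> nat" where
  "proj_card C = card (fst ` C) + card (snd ` C)"

lemma s_of_eq_proj_card: "s_of L \<eta> = proj_card (eta_cl L \<eta>)"
  unfolding s_of_def p1_def p2_def proj_card_def ..

lemma nn_sym: "nn x y \<longleftrightarrow> nn y x"
  unfolding nn_def by arith

lemma nn_imp_aligned: "nn x y \<Longrightarrow> fst x = fst y \<or> snd x = snd y"
  unfolding nn_def by arith

lemma finite_Lam [simp]: "finite (Lam L)"
  unfolding Lam_def by simp

lemma finite_eta_cl [simp]: "finite (eta_cl L \<eta>)"
  by (rule finite_subset[of _ "Lam L"]) (auto simp: eta_cl_def Lam0_def)

lemma eta_cl_subset: "eta_cl L \<eta> \<subseteq> \<eta>"
  unfolding eta_cl_def by blast

lemma eta_cl_mono: "A \<subseteq> B \<Longrightarrow> eta_cl L A \<subseteq> eta_cl L B"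
  unfolding eta_cl_def by blast

lemma eta_cl_insert_outside_Lam0: "x \<notin> Lam0 L \<Longrightarrow> eta_cl L (insert x \<eta>) = eta_cl L \<eta>"
  unfolding eta_cl_def by auto

lemma card_eq_card_eta_cl_add_free:
  "finite \<eta> \<Longrightarrow> card \<eta> = card (eta_cl L \<eta>) + card (free_particles L \<eta>)"
  unfolding free_particles_def
  by (metis card_Diff_subset card_mono eta_cl_subset finite_eta_cl le_add_diff_inverse)

lemma card_eta_cl_le_p1_mult_p2: "card (eta_cl L \<eta>) \<le> p1 L \<eta> * p2 L \<eta>"
proof -
  have "card (eta_cl L \<eta>) \<le> card (fst ` eta_cl L \<eta> \<times> snd ` eta_cl L \<eta>)"
    by (rule card_mono) force+
  thus ?thesis unfolding p1_def p2_def by (simp add: card_cartesian_product)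
qed

lemma proj_card_mono: "finite D \<Longrightarrow> C \<subseteq> D \<Longrightarrow> proj_card C \<le> proj_card D"
  unfolding proj_card_def by (intro add_mono card_mono) auto

lemma proj_card_insert_le: "finite C \<Longrightarrow> proj_card (insert y C) \<le> proj_card C + 2"
  unfolding proj_card_def by (simp add: card_insert_if)

lemma proj_card_insert_nn:
  assumes "finite C" "z \<in> C" "nn y z"
  shows "proj_card (insert y C) \<le> proj_card C + 1"
  using assms nn_imp_aligned[OF assms(3)] unfolding proj_card_def
  by (auto simp: card_insert_if image_iff)

lemma eta_cl_swap_subset:
  assumes "x \<in> A" "y \<notin> A"
  shows "eta_cl L (insert y (A - {x}))
           \<subseteq> insert y (eta_cl L A \<union> {z \<in> free_particles L A - {x}. nn z y})"
proof
  fix z assume z: "z \<in> eta_cl L (insert y (A - {x}))"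
  then obtain u where u: "nn z u" "u \<in> insert y (A - {x})" "u \<in> Lam0 L"
    unfolding eta_cl_def by blast
  show "z \<in> insert y (eta_cl L A \<union> {z \<in> free_particles L A - {x}. nn z y})"
  proof (cases "z = y \<or> u = y")
    case False
    with z u show ?thesis unfolding eta_cl_def by blast
  next
    case True
    with z u show ?thesis unfolding eta_cl_def free_particles_def by blast
  qed
qed

lemma s_of_swap_le:
  assumes fin: "finite A" and "x \<in> A" "y \<notin> A" "nn x y"
    and few_free: "card (free_particles L A) \<le> 1"
  shows "s_of L (insert y (A - {x})) \<le> s_of L A + 2"
proof -
  let ?C = "eta_cl L A"
  let ?F = "{z \<in> free_particles L A - {x}. nn z y}"
  have fin_free: "finite (free_particles L A)"
    using fin unfolding free_particles_def by simp
  have free_unique: "a = b" if "a \<in> free_particles L A" "b \<in> free_particles L A" for a b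
    using few_free card_le_Suc0_iff_eq[OF fin_free] that by auto
  have "proj_card (insert y (?C \<union> ?F)) \<le> proj_card ?C + 2"
  proof (cases "x \<in> ?C")
    case False
    with \<open>x \<in> A\<close> have "?F = {}"
      using free_unique unfolding free_particles_def by blast
    hence "insert y (?C \<union> ?F) = insert y ?C" by (simp only: Un_empty_right)
    thus ?thesis using proj_card_insert_le[of ?C y] by simp
  next
    case True
    have y_step: "proj_card (insert y ?C) \<le> proj_card ?C + 1"
      using proj_card_insert_nn[OF _ True] \<open>nn x y\<close> nn_sym by auto
    show ?thesis
    proof (cases "?F = {}")
      case True
      hence "insert y (?C \<union> ?F) = insert y ?C" by (simp only: Un_empty_right)
      thus ?thesis using y_step by simp
    next
      case False
      then obtain w where w: "w \<in> ?F" by blast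
      hence "?F = {w}" using free_unique by blast
      hence "insert y (?C \<union> ?F) = insert w (insert y ?C)" by auto
      moreover have "proj_card (insert w (insert y ?C)) \<le> proj_card (insert y ?C) + 1"
        using w by (intro proj_card_insert_nn) auto
      ultimately show ?thesis using y_step by simp
    qed
  qed
  moreover have "proj_card (eta_cl L (insert y (A - {x}))) \<le> proj_card (insert y (?C \<union> ?F))"
    using eta_cl_swap_subset[OF \<open>x \<in> A\<close> \<open>y \<notin> A\<close>] fin_free
    by (intro proj_card_mono) auto
  ultimately show ?thesis unfolding s_of_eq_proj_card by linarith
qed

lemma s_of_move_le:
  assumes mv: "move L A E" and few_free: "card (free_particles L A) \<le> 1"
  shows "s_of L E \<le> s_of L A + 2"
proof -
  have fin: "finite A"
    using mv finite_subset[OF _ finite_Lam] unfolding move_def config_def by blast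
  from mv consider
      (swap) x y where "nn x y" "E = swap_sites x y A"
    | (remove) x where "E = A - {x}"
    | (create) x where "x \<in> bdry L" "E = insert x A"
    unfolding move_def by blast
  thus ?thesis
  proof cases
    case (swap x y)
    have "x \<noteq> y" using \<open>nn x y\<close> unfolding nn_def by auto
    consider "x \<in> A" "y \<notin> A" | "y \<in> A" "x \<notin> A" | "x \<in> A \<longleftrightarrow> y \<in> A" by blast
    thus ?thesis
    proof cases
      case 1
      hence "E = insert y (A - {x})"
        using swap(2) \<open>x \<noteq> y\<close> unfolding swap_sites_def by auto
      thus ?thesis using s_of_swap_le[OF fin 1 swap(1) few_free] by simp
    next
      case 2
      hence "E = insert x (A - {y})"
        using swap(2) \<open>x \<noteq> y\<close> unfolding swap_sites_def by auto
      thus ?thesis using s_of_swap_le[OF fin 2] swap(1) nn_sym few_free by simp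
    next
      case 3
      hence "E = A" using swap(2) unfolding swap_sites_def by auto
      thus ?thesis by simp
    qed
  next
    case remove
    thus ?thesis unfolding s_of_eq_proj_card
      by (intro trans_le_add1 proj_card_mono eta_cl_mono) auto
  next
    case create
    hence "x \<notin> Lam0 L" unfolding Lam0_def by simp
    thus ?thesis by (simp add: create(2) s_of_eq_proj_card eta_cl_insert_outside_Lam0)
  qed
qed

lemma card_right_neighbours_add_card_rows_le:
  fixes C :: "site set"
  assumes fin: "finite C"
  shows "card {x \<in> C. (fst x + 1, snd x) \<in> C} + card (snd ` C) \<le> card C"
proof -
  let ?B = "{x \<in> C. (fst x + 1, snd x) \<in> C}"
  define rightmost where "rightmost r = (Max (fst ` {z \<in> C. snd z = r}), r)" for r
  have rightmost_in: "rightmost r \<in> C - ?B" if "r \<in> snd ` C" for r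
  proof -
    let ?row = "fst ` {z \<in> C. snd z = r}"
    have "finite ?row" "?row \<noteq> {}" using fin that by auto
    hence "Max ?row \<in> ?row" "\<forall>k \<in> ?row. k \<le> Max ?row" by simp_all
    thus ?thesis unfolding rightmost_def by force
  qed
  have "inj_on rightmost (snd ` C)" unfolding inj_on_def rightmost_def by simp
  moreover have "rightmost ` snd ` C \<subseteq> C - ?B" using rightmost_in by blast
  ultimately have "card (snd ` C) \<le> card (C - ?B)"
    using card_inj_on_le fin by blast
  moreover have "card (C - ?B) = card C - card ?B"
    using fin by (intro card_Diff_subset) auto
  moreover have "card ?B \<le> card C" using fin by (intro card_mono) auto
  ultimately show ?thesis by linarith
qed

lemma card_upper_neighbours_add_card_columns_le:
  fixes C :: "site set"
  assumes "finite C"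
  shows "card {x \<in> C. (fst x, snd x + 1) \<in> C} + card (fst ` C) \<le> card C"
proof -
  have "{x \<in> prod.swap ` C. (fst x + 1, snd x) \<in> prod.swap ` C}
          = prod.swap ` {x \<in> C. (fst x, snd x + 1) \<in> C}"
    by force
  moreover have "snd ` prod.swap ` C = fst ` C" by force
  ultimately show ?thesis
    using card_right_neighbours_add_card_rows_le[of "prod.swap ` C"] assms
    by (simp add: card_image)
qed

lemma hbonds_add_p2_le: "hbonds L \<eta> + p2 L \<eta> \<le> card (eta_cl L \<eta>)"
proof -
  let ?C = "eta_cl L \<eta>"
  have "nn x (fst x + 1, snd x)" "nn (fst x + 1, snd x) x" for x :: site
    unfolding nn_def by simp_all
  hence "hbonds L \<eta> \<le> card {x \<in> ?C. (fst x + 1, snd x) \<in> ?C}"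
    unfolding hbonds_def by (intro card_mono) (simp, unfold eta_cl_def, blast)
  thus ?thesis
    using card_right_neighbours_add_card_rows_le[of ?C] unfolding p2_def by simp
qed

lemma vbonds_add_p1_le: "vbonds L \<eta> + p1 L \<eta> \<le> card (eta_cl L \<eta>)"
proof -
  let ?C = "eta_cl L \<eta>"
  have "nn x (fst x, snd x + 1)" "nn (fst x, snd x + 1) x" for x :: site
    unfolding nn_def by simp_all
  hence "vbonds L \<eta> \<le> card {x \<in> ?C. (fst x, snd x + 1) \<in> ?C}"
    unfolding vbonds_def by (intro card_mono) (simp, unfold eta_cl_def, blast)
  thus ?thesis
    using card_upper_neighbours_add_card_columns_le[of ?C] unfolding p1_def by simp
qed

lemma H_ge_projection_bound:
  assumes "config L \<eta>" "U1 \<ge> 0" "U2 \<ge> 0"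
  shows "H L U1 U2 \<Delta> \<eta> \<ge> U1 * p2 L \<eta> + U2 * p1 L \<eta> - eps U1 U2 \<Delta> * card (eta_cl L \<eta>)
                         + \<Delta> * card (free_particles L \<eta>)"
proof -
  have "finite \<eta>" using assms(1) unfolding config_def by (rule finite_subset[OF _ finite_Lam])
  hence card: "card \<eta> = card (eta_cl L \<eta>) + card (free_particles L \<eta>)"
    by (rule card_eq_card_eta_cl_add_free)
  have "U1 * hbonds L \<eta> \<le> U1 * (card (eta_cl L \<eta>) - real (p2 L \<eta>))"
    using hbonds_add_p2_le[of L \<eta>] assms(2) by (intro mult_left_mono) auto
  moreover have "U2 * vbonds L \<eta> \<le> U2 * (card (eta_cl L \<eta>) - real (p1 L \<eta>))"
    using vbonds_add_p1_le[of L \<eta>] assms(3) by (intro mult_left_mono) auto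
  ultimately show ?thesis
    unfolding H_def eps_def card by (simp add: algebra_simps)
qed

(* The bound decreases in a (as e b > U2) and, at a = 3 l - 2 - b, increases in b (as U1 > 2 U2). *)
lemma projection_bound_gt_Gamma_if_small_perimeter:
  fixes U1 U2 e l a b c :: real
  assumes U: "U1 > 2 * U2" and e: "0 < e" "e < U2" and ell: "U2 < e * l" "e * (l - 1) < U2"
    and b: "b \<ge> l" and c: "c \<le> a * b" and ab: "a + b \<le> 3 * l - 2"
  shows "U1 * b + U2 * a - e * c + 2 * (U1 + U2 - e)
           > U1 * l + 2 * U2 * l + U1 - U2 - 2 * e * l\<^sup>2 + 3 * e * l - 2 * e"
proof -
  have el_eb: "e * l \<le> e * b" using b e by simp
  have "e * c \<le> e * (a * b)" using c e by simp
  moreover have "(3 * l - 2 - b - a) * (e * b - U2) \<ge> 0"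
    using ab ell(1) el_eb by (intro mult_nonneg_nonneg) auto
  moreover have "(b - l) * (U1 - U2 - e * l + 2 * e + e * (b - l)) \<ge> 0"
  proof -
    have "e * (b - l) = e * b - e * l" "e * (l - 1) = e * l - e" by (simp_all add: algebra_simps)
    hence "U1 - U2 - e * l + 2 * e + e * (b - l) \<ge> 0" using el_eb ell(2) U e by linarith
    thus ?thesis using b by simp
  qed
  moreover have "U1 * b + U2 * a - e * (a * b)
      = U1 * l + (2 * l - 2) * (U2 - e * l) + (b - l) * (U1 - U2 - e * l + 2 * e + e * (b - l))
        + (3 * l - 2 - b - a) * (e * b - U2)"
    by (simp add: algebra_simps)
  moreover have "U1 + U2 - e * l > 0" using ell(2) U e by (simp add: algebra_simps)
  ultimately show ?thesis by (simp add: algebra_simps power2_eq_square)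
qed

(* The bound increases in a (as e (l - 1) < U2); at a = 2 l - 1 it exceeds Gamma by U1 + 2 U2 - 2 e. *)
lemma projection_bound_gt_Gamma_if_ell2_rows:
  fixes U1 U2 e l a c :: real
  assumes U: "U1 > 2 * U2" and e: "0 < e" "e < U2" and ell: "e * (l - 1) < U2"
    and a: "a \<ge> 2 * l - 1" and c: "c \<le> a * l - a + 1"
  shows "U1 * l + U2 * a - e * c + 2 * (U1 + U2 - e)
           > U1 * l + 2 * U2 * l + U1 - U2 - 2 * e * l\<^sup>2 + 3 * e * l - 2 * e"
proof -
  have "e * c \<le> e * (a * l - a + 1)" using c e by simp
  moreover have "(a - (2 * l - 1)) * (U2 - e * (l - 1)) \<ge> 0"
    using a ell by simp
  moreover have "U2 * a - e * (a * l - a + 1)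
      = (2 * l - 1) * (U2 - e * (l - 1)) - e + (a - (2 * l - 1)) * (U2 - e * (l - 1))"
    by (simp add: algebra_simps)
  ultimately show ?thesis using U e by (simp add: algebra_simps power2_eq_square)
qed

lemma of_int_ceiling_gt_if_not_Nats:
  fixes x :: real
  assumes "x > 0" "x \<notin> \<nat>"
  shows "x < of_int \<lceil>x\<rceil>"
proof -
  have "x \<noteq> of_int \<lceil>x\<rceil>"
  proof
    assume "x = of_int \<lceil>x\<rceil>"
    moreover have "\<lceil>x\<rceil> \<ge> 0" using assms(1) by simp
    ultimately have "x \<in> \<nat>" unfolding Nats_altdef1 by blast
    with assms(2) show False ..
  qed
  thus ?thesis using le_of_int_ceiling[of x] by linarith
qed

lemma ell2_bounds:
  assumes "U2 > 0" "eps U1 U2 \<Delta> > 0" "U2 / eps U1 U2 \<Delta> \<notin> \<nat>"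
  shows "U2 < eps U1 U2 \<Delta> * ell2 U1 U2 \<Delta>" "eps U1 U2 \<Delta> * (ell2 U1 U2 \<Delta> - 1) < U2"
proof -
  let ?x = "U2 / eps U1 U2 \<Delta>"
  have "?x < of_int \<lceil>?x\<rceil>" "of_int \<lceil>?x\<rceil> - 1 < ?x"
    using of_int_ceiling_gt_if_not_Nats[of ?x] ceiling_correct[of ?x] assms by auto
  thus "U2 < eps U1 U2 \<Delta> * ell2 U1 U2 \<Delta>" "eps U1 U2 \<Delta> * (ell2 U1 U2 \<Delta> - 1) < U2"
    using assms(2) unfolding ell2_def by (simp_all add: field_simps)
qed

lemma inB_cases_if_p2_ge_ell2:
  assumes "inB L U1 U2 \<Delta> \<eta>" "int (p2 L \<eta>) \<ge> ell2 U1 U2 \<Delta>"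
  obtains "int (s_of L \<eta>) \<le> 3 * ell2 U1 U2 \<Delta> - 2"
    | "int (p2 L \<eta>) = ell2 U1 U2 \<Delta>" "int (s_of L \<eta>) \<ge> 3 * ell2 U1 U2 \<Delta> - 1"
      "v_of L \<eta> \<ge> int (p1 L \<eta>) - 1"
  using assms unfolding inB_def Let_def sstar_def pmax_def by fastforce

lemma H_gt_Gamma:
  assumes U: "U2 > 0" "U1 > 2 * U2"
    and e: "0 < eps U1 U2 \<Delta>" "eps U1 U2 \<Delta> < U2" "U2 / eps U1 U2 \<Delta> \<notin> \<nat>"
    and \<eta>: "config L \<eta>" "card (free_particles L \<eta>) \<ge> 2" "inB L U1 U2 \<Delta> \<eta>"
      "int (p2 L \<eta>) \<ge> ell2 U1 U2 \<Delta>"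
  shows "H L U1 U2 \<Delta> \<eta> > Gamma U1 U2 \<Delta>"
proof -
  define e l a b c where "e = eps U1 U2 \<Delta>" and "l = real_of_int (ell2 U1 U2 \<Delta>)"
    and "a = real (p1 L \<eta>)" and "b = real (p2 L \<eta>)" and "c = real (card (eta_cl L \<eta>))"
  have e': "0 < e" "e < U2" using e(1,2) by (simp_all add: e_def)
  have \<Delta>: "\<Delta> = U1 + U2 - e" unfolding e_def eps_def by simp
  have ell: "U2 < e * l" "e * (l - 1) < U2"
    using ell2_bounds[OF U(1) e(1,3)] unfolding e_def l_def by simp_all
  have b: "b \<ge> l" using \<eta>(4) unfolding b_def l_def by linarith
  have c: "c \<le> a * b"
    using card_eta_cl_le_p1_mult_p2[of L \<eta>] unfolding a_def b_def c_def of_nat_mult[symmetric]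
    by (simp only: of_nat_le_iff)
  have "\<Delta> * card (free_particles L \<eta>) \<ge> \<Delta> * 2"
    using \<eta>(2) \<Delta> U e' by (intro mult_left_mono) auto
  hence "H L U1 U2 \<Delta> \<eta> \<ge> U1 * b + U2 * a - e * c + 2 * (U1 + U2 - e)"
    using H_ge_projection_bound[OF \<eta>(1), of U1 U2 \<Delta>] U \<Delta>
    unfolding a_def b_def c_def e_def[symmetric] by fastforce
  moreover have "U1 * b + U2 * a - e * c + 2 * (U1 + U2 - e)
      > U1 * l + 2 * U2 * l + U1 - U2 - 2 * e * l\<^sup>2 + 3 * e * l - 2 * e"
    using \<eta>(3,4)
  proof (cases rule: inB_cases_if_p2_ge_ell2)
    case 1
    hence "a + b \<le> 3 * l - 2" unfolding a_def b_def l_def s_of_def by linarith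
    thus ?thesis
      using projection_bound_gt_Gamma_if_small_perimeter U e' ell b c by blast
  next
    case 2
    have "int (card (eta_cl L \<eta>)) \<le> int (p1 L \<eta>) * ell2 U1 U2 \<Delta> - int (p1 L \<eta>) + 1"
      using 2(3) unfolding v_of_def 2(1)[symmetric] by linarith
    hence "real_of_int (card (eta_cl L \<eta>)) \<le> real_of_int (int (p1 L \<eta>) * ell2 U1 U2 \<Delta> - int (p1 L \<eta>) + 1)"
      by (simp only: of_int_le_iff)
    moreover have "b = l" "a \<ge> 2 * l - 1"
      using 2(1,2) unfolding a_def b_def l_def s_of_def by linarith+
    ultimately have "b = l" "a \<ge> 2 * l - 1" "c \<le> a * l - a + 1"
      unfolding a_def c_def l_def by simp_all
    thus ?thesis
      using projection_bound_gt_Gamma_if_ell2_rows U e' ell by blast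
  qed
  moreover have "Gamma U1 U2 \<Delta> = U1 * l + 2 * U2 * l + U1 - U2 - 2 * e * l\<^sup>2 + 3 * e * l - 2 * e"
    unfolding Gamma_def e_def l_def Let_def ..
  ultimately show ?thesis by linarith
qed

theorem proposition4p3:
  fixes U1 U2 :: real
  assumes "U2 > 0" and "U1 > 2 * U2"
  shows "\<exists>\<epsilon>0 > 0. \<forall>\<Delta> (L::nat) \<eta>b \<eta>.
           \<Delta> > 0 \<and> 0 < eps U1 U2 \<Delta> \<and> eps U1 U2 \<Delta> < \<epsilon>0
           \<and> U2 / eps U1 U2 \<Delta> \<notin> \<nat>
           \<and> move L \<eta>b \<eta> \<and> inB L U1 U2 \<Delta> \<eta>b
           \<and> int (s_of L \<eta>) - int (s_of L \<eta>b) \<ge> 3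
           \<and> pmin L \<eta> \<ge> 4
           \<and> int (p2 L \<eta>b) \<ge> ell2 U1 U2 \<Delta>
           \<longrightarrow> inB L U1 U2 \<Delta> \<eta> \<or> (\<not> inB L U1 U2 \<Delta> \<eta> \<and> H L U1 U2 \<Delta> \<eta>b > Gamma U1 U2 \<Delta>)"
proof (intro exI[of _ U2] conjI allI impI)
  show "U2 > 0" by fact
next
  fix \<Delta> :: real and L :: nat and \<eta>b \<eta> :: "site set"
  assume h: "\<Delta> > 0 \<and> 0 < eps U1 U2 \<Delta> \<and> eps U1 U2 \<Delta> < U2
           \<and> U2 / eps U1 U2 \<Delta> \<notin> \<nat>
           \<and> move L \<eta>b \<eta> \<and> inB L U1 U2 \<Delta> \<eta>b
           \<and> int (s_of L \<eta>) - int (s_of L \<eta>b) \<ge> 3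
           \<and> pmin L \<eta> \<ge> 4
           \<and> int (p2 L \<eta>b) \<ge> ell2 U1 U2 \<Delta>"
  hence "card (free_particles L \<eta>b) \<ge> 2"
    using s_of_move_le[of L \<eta>b \<eta>] by fastforce
  moreover have "config L \<eta>b" using h unfolding move_def by blast
  ultimately have "H L U1 U2 \<Delta> \<eta>b > Gamma U1 U2 \<Delta>"
    using H_gt_Gamma[OF assms] h by blast
  thus "inB L U1 U2 \<Delta> \<eta> \<or> (\<not> inB L U1 U2 \<Delta> \<eta> \<and> H L U1 U2 \<Delta> \<eta>b > Gamma U1 U2 \<Delta>)"
    by blast
qed

end
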